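(* Assume (H2) below. Let either $f\in\mathcal B_b(S)$ with $(\mu,f)=0$, in which case $\overline M^\pi_n(f)=n^{-1}\sum_{i=1}^nf(X_{\pi(i)})$, or $f\in\mathcal B_b(S^3)$ with $(\mu,Pf)=0$, in which case $\overline M^\pi_n(f)=n^{-1}\sum_{i=1}^nf(\Delta_{\pi(i)})$. Then $\overline M^\pi_n(f)$ converges almost surely to $0$ as $n\to\infty$.
   Context: Binary tree: $\mathbb T=\mathbb N^*$, vertex $n$ having daughters $2n,2n+1$; $\mathbb G_r=\{2^r,\dots,2^{r+1}-1\}$, $\mathbb T_r=\bigcup_{q=0}^r\mathbb G_q$. $(S,\mathcal S)$ is a metric space with Borel $\sigma$-field; $\mathcal B_b(S^p)$ denotes bounded measurable real functions on $S^p$. A $\mathbb T$-transition probability $P$ is a Markov kernel from $S$ to $S^2$; $P_0(x,B)=P(x,B\times S)$, $P_1(x,B)=P(x,S\times B)$, $Q=(P_0+P_1)/2$, $Pf(x)=\int f(x,y,z)P(x,dy\,dz)$. $(X_n)_{n\in\mathbb T}$ is a bifurcating Markov chain with initial law $\nu$ and $\mathbb T$-transition probability $P$: with $\mathcal F_r=\sigma(X_i,i\in\mathbb T_r)$, $\mathcal L(X_1)=\nu$ and for every $r$ and every family $(f_n)_{n\in\mathbb G_r}\subset\mathcal B_b(S^3)$, $\mathbb E[\prod_{n\in\mathbb G_r}f_n(X_n,X_{2n},X_{2n+1})\mid\mathcal F_r]=\prod_{n\in\mathbb G_r}Pf_n(X_n)$. $\Delta_i=(X_i,X_{2i},X_{2i+1})$.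 $\pi$ is a random permutation of $\mathbb N^*$ leaving each $\mathbb G_r$ invariant, drawn uniformly among such permutations, independently of $X$. $\mu$ is a probability measure on $S$, $(\mu,g)=\int gd\mu$. Hypothesis (H2): there is $\alpha\in(0,1)$ such that for every $g\in\mathcal B_b(S)$ with $(\mu,g)=0$ there exists $c>0$ with $|Q^rg(x)|\le c\alpha^r$ for all $r\in\mathbb N$, $x\in S$. *)

theory Defs
  imports "HOL-Probability.Probability"
begin

text \<open>Generations of the binary tree (vertices are positive naturals, n has daughters 2n, 2n+1).\<close>
definition gen :: "nat \<Rightarrow> nat set" where
  "gen r = {2^r ..< 2^(r+1)}"

definition tree_upto :: "nat \<Rightarrow> nat set" where
  "tree_upto r = (\<Union>q\<le>r. gen q)"

definition bounded_meas :: "'a measure \<Rightarrow> ('a \<Rightarrow> real) set" where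
  "bounded_meas A = {f. f \<in> borel_measurable A \<and> (\<exists>C. \<forall>x\<in>space A. \<bar>f x\<bar> \<le> C)}"

abbreviation S2 :: "('a::metric_space \<times> 'a) measure" where
  "S2 \<equiv> borel \<Otimes>\<^sub>M borel"

abbreviation S3 :: "('a::metric_space \<times> 'a \<times> 'a) measure" where
  "S3 \<equiv> borel \<Otimes>\<^sub>M (borel \<Otimes>\<^sub>M borel)"

definition T_transition :: "('a::metric_space \<Rightarrow> ('a \<times> 'a) measure) \<Rightarrow> bool" where
  "T_transition P \<longleftrightarrow> P \<in> measurable borel (prob_algebra S2)"

definition Pop :: "('a \<Rightarrow> ('a \<times> 'a) measure) \<Rightarrow> ('a \<times> 'a \<times> 'a \<Rightarrow> real) \<Rightarrow> 'a \<Rightarrow> real" where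
  "Pop P f x = (\<integral>yz. f (x, fst yz, snd yz) \<partial>(P x))"

definition Qop :: "('a \<Rightarrow> ('a \<times> 'a) measure) \<Rightarrow> ('a \<Rightarrow> real) \<Rightarrow> 'a \<Rightarrow> real" where
  "Qop P g x = ((\<integral>yz. g (fst yz) \<partial>(P x)) + (\<integral>yz. g (snd yz) \<partial>(P x))) / 2"

definition nat_filtr :: "'b measure \<Rightarrow> (nat \<Rightarrow> 'b \<Rightarrow> 'a::topological_space) \<Rightarrow> nat \<Rightarrow> 'b measure" where
  "nat_filtr M X r = sigma (space M) {X i -` B \<inter> space M | i B. i \<in> tree_upto r \<and> B \<in> sets borel}"

definition BMC :: "'b measure \<Rightarrow> (nat \<Rightarrow> 'b \<Rightarrow> 'a::metric_space) \<Rightarrow> 'a measure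
    \<Rightarrow> ('a \<Rightarrow> ('a \<times> 'a) measure) \<Rightarrow> bool" where
  "BMC M X \<nu> P \<longleftrightarrow>
     (\<forall>n. X n \<in> borel_measurable M) \<and>
     distr M borel (X 1) = \<nu> \<and>
     (\<forall>r (f :: nat \<Rightarrow> 'a \<times> 'a \<times> 'a \<Rightarrow> real). (\<forall>n\<in>gen r. f n \<in> bounded_meas S3) \<longrightarrow>
        (AE \<omega> in M. real_cond_exp M (nat_filtr M X r)
              (\<lambda>\<omega>. \<Prod>n\<in>gen r. f n (X n \<omega>, X (2*n) \<omega>, X (2*n+1) \<omega>)) \<omega>
            = (\<Prod>n\<in>gen r. Pop P (f n) (X n \<omega>))))"

text \<open>pi is a random permutation of N* leaving each generation invariant, uniformly distributed
  among such permutations (i.e. independent uniform permutations of each generation), and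
  independent of the process X.\<close>
definition gen_perm :: "(nat \<Rightarrow> nat) \<Rightarrow> bool" where
  "gen_perm \<sigma> \<longleftrightarrow> (\<forall>r. bij_betw \<sigma> (gen r) (gen r))"

definition uniform_gen_perm :: "'b measure \<Rightarrow> ('b \<Rightarrow> nat \<Rightarrow> nat) \<Rightarrow> (nat \<Rightarrow> 'b \<Rightarrow> 'a::metric_space) \<Rightarrow> bool" where
  "uniform_gen_perm M \<pi> X \<longleftrightarrow>
     (\<forall>\<omega>\<in>space M. gen_perm (\<pi> \<omega>)) \<and>
     (\<forall>i. (\<lambda>\<omega>. \<pi> \<omega> i) \<in> measurable M (count_space UNIV)) \<and>
     (\<forall>r \<sigma>. gen_perm \<sigma> \<longrightarrow>
        measure M {\<omega>\<in>space M. \<forall>i\<in>tree_upto r. \<pi> \<omega> i = \<sigma> i}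
          = 1 / (\<Prod>q\<le>r. fact (2^q))) \<and>
     prob_space.indep_set M
       {\<pi> -` B \<inter> space M | B. B \<in> sets (Pi\<^sub>M UNIV (\<lambda>_. count_space UNIV))}
       {(\<lambda>\<omega> n. X n \<omega>) -` B \<inter> space M | B. B \<in> sets (Pi\<^sub>M UNIV (\<lambda>_. borel))}"

definition H2 :: "('a::metric_space \<Rightarrow> ('a \<times> 'a) measure) \<Rightarrow> 'a measure \<Rightarrow> bool" where
  "H2 P \<mu> \<longleftrightarrow> (\<exists>\<alpha>::real. 0 < \<alpha> \<and> \<alpha> < 1 \<and>
     (\<forall>g \<in> bounded_meas (borel :: 'a measure). (\<integral>x. g x \<partial>\<mu>) = 0 \<longrightarrow>
        (\<exists>c>0. \<forall>r x. \<bar>(Qop P ^^ r) g x\<bar> \<le> c * \<alpha>^r)))"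

end

theory Submission
  imports Defs "HOL-Combinatorics.Transposition"
begin

text \<open>Write \<open>S n\<close> for the sum of \<open>f(\<Delta> (\<pi> i))\<close> over \<open>i = 1..n\<close>. Within one generation
  the Markov property decouples distinct vertices, and iterating over the generations with (H2)
  bounds the second moment of the sum of \<open>f(\<Delta> i)\<close> over \<open>gen q\<close> by \<open>O(\<rho>\<^sup>q)\<close>, where
  \<open>\<rho> = 2(1 + \<alpha>\<^sup>2) < 4\<close>. Since \<open>\<pi>\<close> is uniform and independent of \<open>X\<close>, a sum over any part of a
  permuted generation inherits this bound, and Cauchy--Schwarz over the generations gives
  \<open>E (S m)\<^sup>2 = O(\<rho>\<^sup>r)\<close> for \<open>m \<in> gen r\<close>. Hence \<open>8\<^sup>-\<^sup>r\<close> times the sum of \<open>(S m)\<^sup>2\<close> over \<open>gen r\<close>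
  has summable expectations and tends to \<open>0\<close> almost surely, which for a sequence with bounded
  increments forces \<open>S n / n \<rightarrow> 0\<close>. Functions of one variable are the case \<open>f(x, y, z) = f(x)\<close>.\<close>

subsection \<open>Generations of the binary tree\<close>

lemma finite_gen [simp]: "finite (gen r)"
  unfolding gen_def by simp

lemma card_gen: "card (gen r) = 2^r"
  unfolding gen_def by simp

lemma gen_0: "gen 0 = {1}"
  unfolding gen_def by auto

lemma gen_unique: "a \<in> gen q \<Longrightarrow> a \<in> gen r \<Longrightarrow> q = r"
proof (induction q r rule: linorder_wlog)
  case (le q r)
  show ?case
  proof (rule ccontr)
    assume "q \<noteq> r"
    then have "(2::nat)^(q+1) \<le> 2^r" using le by (intro power_increasing) auto
    then show False using le unfolding gen_def by auto
  qed
qed (simp add: eq_commute)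

lemma gen_le_of_less: "i \<in> gen q \<Longrightarrow> i < 2^Suc r \<Longrightarrow> q \<le> r"
proof (rule ccontr)
  assume i: "i \<in> gen q" "i < 2^Suc r" "\<not> q \<le> r"
  then have "(2::nat)^Suc r \<le> 2^q" by (intro power_increasing) auto
  then show False using i unfolding gen_def by auto
qed

lemma ex_gen: "1 \<le> i \<Longrightarrow> \<exists>q. i \<in> gen q"
  using ex_power_ivl1[of 2 i] unfolding gen_def by auto

lemma finite_tree_upto: "finite (tree_upto r)"
  unfolding tree_upto_def by simp

lemma gen_subset_tree_upto: "q \<le> r \<Longrightarrow> gen q \<subseteq> tree_upto r"
  unfolding tree_upto_def by auto

lemma sum_double_interval:
  "(\<Sum>a\<in>{2*A..<2*(A+k)}. h a) = (\<Sum>l\<in>{A..<A+k}. h (2*l) + h (2*l+1::nat))"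
proof (induction k)
  case (Suc k)
  have "{2*A..<2*(A+Suc k)} = {2*A..<2*(A+k)} \<union> {2*(A+k), 2*(A+k)+1}" by auto
  then show ?case using Suc by (simp add: sum.union_disjoint add_ac)
qed simp

lemma sum_gen_Suc: "(\<Sum>a\<in>gen (Suc q). h a) = (\<Sum>l\<in>gen q. h (2*l) + h (2*l+1))"
proof -
  have "gen (Suc q) = {2*2^q..<2*(2^q + 2^q)}" "gen q = {2^q..<2^q+2^q}"
    unfolding gen_def by (simp_all add: mult_2)
  then show ?thesis using sum_double_interval[of h "2^q" "2^q"] by simp
qed

lemma abs_diff_le_of_increments:
  fixes a :: "nat \<Rightarrow> real"
  assumes "\<And>m. \<bar>a (Suc m) - a m\<bar> \<le> L"
  shows "\<bar>a (n + k) - a n\<bar> \<le> L * k"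
proof (induction k)
  case (Suc k)
  have "\<bar>a (n + Suc k) - a n\<bar> \<le> \<bar>a (Suc (n + k)) - a (n + k)\<bar> + \<bar>a (n + k) - a n\<bar>" by simp
  also have "\<dots> \<le> L + L * k" using assms[of "n + k"] Suc by linarith
  finally show ?case by (simp add: algebra_simps)
qed simp

lemma mult_le_square_of_abs_le:
  fixes x y b :: real
  assumes "\<bar>x\<bar> \<le> b" and "\<bar>y\<bar> \<le> b"
  shows "x * y \<le> b\<^sup>2"
proof -
  have "x * y \<le> \<bar>x\<bar> * \<bar>y\<bar>" by (metis abs_ge_self abs_mult)
  also have "\<dots> \<le> b * b" using assms by (intro mult_mono) auto
  finally show ?thesis by (simp add: power2_eq_square)
qed

lemma sum_power_le_geometric:
  fixes t :: real
  assumes "1 < t"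
  shows "(\<Sum>q\<le>r. t^q) \<le> t^Suc r / (t - 1)"
proof -
  have "(\<Sum>q\<le>r. t^q) = (\<Sum>q<Suc r. t^q)" by (simp add: lessThan_Suc_atMost)
  also have "\<dots> = (t^Suc r - 1) / (t - 1)" using assms by (intro geometric_sum) auto
  also have "\<dots> \<le> t^Suc r / (t - 1)" using assms by (intro divide_right_mono) auto
  finally show ?thesis .
qed

lemma square_sum_le_weighted:
  fixes Y w :: "nat \<Rightarrow> real"
  assumes w: "\<And>q. 0 < w q"
  shows "(\<Sum>q\<le>r. Y q)\<^sup>2 \<le> (\<Sum>q\<le>r. w q) * (\<Sum>q\<le>r. (Y q)\<^sup>2 / w q)"
proof -
  have "sqrt (w q) \<noteq> 0" for q using w[of q] by simp
  then have "(\<Sum>q\<le>r. Y q) = (\<Sum>q\<le>r. sqrt (w q) * (Y q / sqrt (w q)))" by simp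
  then have "(\<Sum>q\<le>r. Y q)\<^sup>2 \<le> (\<Sum>q\<le>r. (sqrt (w q))\<^sup>2) * (\<Sum>q\<le>r. (Y q / sqrt (w q))\<^sup>2)"
    using Cauchy_Schwarz_ineq_sum by metis
  also have "\<dots> = (\<Sum>q\<le>r. w q) * (\<Sum>q\<le>r. (Y q)\<^sup>2 / w q)"
    using w by (simp add: less_imp_le power_divide)
  finally show ?thesis .
qed

text \<open>If \<open>|a n| \<ge> e 2^r\<close> for some \<open>n \<in> gen r\<close>, the bounded increments keep \<open>|a|\<close> above
  \<open>e 2^r / 2\<close> on a window of length about \<open>e 2^r / (2L)\<close> inside \<open>gen r \<union> gen (r+1)\<close>.\<close>

lemma gen_energy_ge:
  fixes a :: "nat \<Rightarrow> real"
  assumes inc: "\<And>m. \<bar>a (Suc m) - a m\<bar> \<le> L"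
    and n: "n \<in> gen r" and e: "0 < e" "e \<le> L" and big: "e * 2^r \<le> \<bar>a n\<bar>"
  shows "8^r * (e^3 / (8 * L)) \<le> (\<Sum>m\<in>gen r. (a m)\<^sup>2) + (\<Sum>m\<in>gen (Suc r). (a m)\<^sup>2)"
proof -
  have L: "0 < L" using e by linarith
  define x where "x = e * 2^r / (2 * L)"
  define h where "h = nat \<lfloor>x\<rfloor>"
  have x0: "0 \<le> x" unfolding x_def using e L by simp
  have h_le: "real h \<le> x" and x_less: "x < real h + 1"
    unfolding h_def using x0 by linarith+
  have "x \<le> 2^r / 2" unfolding x_def using e L by (simp add: field_simps)
  moreover have "(2::real)^r / 2 < 2^r" by simp
  ultimately have "real h < 2^r" using h_le by linarith
  then have h: "h < 2^r" by (metis of_nat_less_numeral_power_cancel_iff)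
  have window: "{n..n+h} \<subseteq> gen r \<union> gen (Suc r)"
    using n h unfolding gen_def by auto
  have lower: "(e * 2^r / 2)\<^sup>2 \<le> (a m)\<^sup>2" if m: "m \<in> {n..n+h}" for m
  proof -
    have "\<bar>a (n + (m - n)) - a n\<bar> \<le> L * (m - n)"
      by (rule abs_diff_le_of_increments[where a=a, OF inc])
    moreover have "L * (m - n) \<le> L * x" using m h_le L by (simp add: of_nat_diff)
    moreover have "L * x = e * 2^r / 2" unfolding x_def using L by simp
    ultimately have "e * 2^r / 2 \<le> \<bar>a m\<bar>" using m big by simp
    then show ?thesis using power_mono[of "e * 2^r / 2" "\<bar>a m\<bar>" 2] e by simp
  qed
  have "8^r * (e^3 / (8 * L)) = x * (e * 2^r / 2)\<^sup>2"
    unfolding x_def by (simp add: field_simps power2_eq_square power3_eq_cube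
        power_mult_distrib[symmetric])
  also have "\<dots> \<le> (real h + 1) * (e * 2^r / 2)\<^sup>2"
    using x_less by (intro mult_right_mono) auto
  also have "\<dots> = (\<Sum>m\<in>{n..n+h}. (e * 2^r / 2)\<^sup>2)" by simp
  also have "\<dots> \<le> (\<Sum>m\<in>{n..n+h}. (a m)\<^sup>2)" by (rule sum_mono[OF lower])
  also have "\<dots> \<le> (\<Sum>m\<in>gen r \<union> gen (Suc r). (a m)\<^sup>2)"
    by (rule sum_mono2[OF _ window]) auto
  also have "\<dots> = (\<Sum>m\<in>gen r. (a m)\<^sup>2) + (\<Sum>m\<in>gen (Suc r). (a m)\<^sup>2)"
    by (rule sum.union_disjoint) (auto simp: gen_def)
  finally show ?thesis .
qed

lemma LIMSEQ_div_of_gen_energy: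
  fixes a :: "nat \<Rightarrow> real"
  assumes inc: "\<And>m. \<bar>a (Suc m) - a m\<bar> \<le> K"
    and energy: "(\<lambda>r. (\<Sum>m\<in>gen r. (a m)\<^sup>2) / 8^r) \<longlonglongrightarrow> 0"
  shows "(\<lambda>n. a n / real n) \<longlonglongrightarrow> 0"
proof (rule LIMSEQ_I)
  fix \<epsilon> :: real assume \<epsilon>: "0 < \<epsilon>"
  define L where "L = K + 1"
  have L: "0 < L" using inc[of 0] unfolding L_def by linarith
  have incL: "\<bar>a (Suc m) - a m\<bar> \<le> L" for m using inc[of m] unfolding L_def by linarith
  define e where "e = min \<epsilon> L"
  have e: "0 < e" "e \<le> \<epsilon>" "e \<le> L" unfolding e_def using \<epsilon> L by auto
  define V where "V r = (\<Sum>m\<in>gen r. (a m)\<^sup>2) / 8^r" for r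
  \<comment> \<open>\<open>9 e\<^sup>3 / (144 L) < e\<^sup>3 / (8 L)\<close>, which contradicts \<open>gen_energy_ge\<close> for all large \<open>r\<close>\<close>
  have "e^3 / (144 * L) > 0" using e L by simp
  from LIMSEQ_D[OF energy[folded V_def] this]
  obtain R where R0: "\<And>r. r \<ge> R \<Longrightarrow> \<bar>V r\<bar> < e^3 / (144 * L)" by auto
  have R: "V r < e^3 / (144 * L)" if "R \<le> r" for r using R0[OF that] by linarith
  have small: "\<bar>a n\<bar> < e * 2^r" if r: "R \<le> r" and n: "n \<in> gen r" for r n
  proof (rule ccontr)
    assume "\<not> \<bar>a n\<bar> < e * 2^r"
    then have "8^r * (e^3 / (8 * L)) \<le> 8^r * V r + 8^Suc r * V (Suc r)"
      using gen_energy_ge[where a=a, OF incL n e(1,3)] unfolding V_def by simp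
    also have "\<dots> < 8^r * (e^3 / (144 * L)) + 8^Suc r * (e^3 / (144 * L))"
      using R[of r] R[of "Suc r"] r by (intro add_strict_mono mult_strict_left_mono) auto
    also have "\<dots> = 8^r * (e^3 / (16 * L))" by simp
    finally show False using e L by (simp add: field_simps)
  qed
  show "\<exists>N. \<forall>n\<ge>N. norm (a n / real n - 0) < \<epsilon>"
  proof (intro exI allI impI)
    fix n :: nat assume n: "2^R \<le> n"
    moreover have "(1::nat) \<le> 2^R" by simp
    ultimately have n1: "1 \<le> n" by linarith
    then obtain r where r: "n \<in> gen r" using ex_gen by blast
    have "(2::nat)^R < 2^Suc r" using n r unfolding gen_def by simp
    then have "R \<le> r" using power_less_imp_less_exp[of "2::nat" R "Suc r"] by simp
    then have "\<bar>a n\<bar> < e * 2^r" using small r by blast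
    also have "\<dots> \<le> \<epsilon> * n"
      using e r unfolding gen_def by (intro mult_mono) (auto simp: of_nat_le_iff[symmetric])
    finally show "norm (a n / real n - 0) < \<epsilon>" using n1 by (simp add: abs_div pos_divide_less_eq)
  qed
qed

lemma (in finite_measure) integrable_bounded:
  fixes f :: "'a \<Rightarrow> real"
  assumes "f \<in> borel_measurable M" and "\<And>x. \<bar>f x\<bar> \<le> C"
  shows "integrable M f"
  using assms by (intro integrable_const_bound[where B=C]) auto

lemma (in finite_measure) integral_square_sum:
  fixes F :: "'i \<Rightarrow> 'a \<Rightarrow> real"
  assumes I: "finite I" and meas: "\<And>i. i \<in> I \<Longrightarrow> F i \<in> borel_measurable M"
    and bounded: "\<And>i. i \<in> I \<Longrightarrow> \<exists>C. \<forall>x. \<bar>F i x\<bar> \<le> C"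
  shows "(\<integral>x. (\<Sum>i\<in>I. F i x)\<^sup>2 \<partial>M) = (\<Sum>i\<in>I. \<Sum>j\<in>I. \<integral>x. F i x * F j x \<partial>M)"
proof -
  obtain C where C: "\<And>i x. i \<in> I \<Longrightarrow> \<bar>F i x\<bar> \<le> C i" using bounded by metis
  have int: "integrable M (\<lambda>x. F i x * F j x)" if "i \<in> I" "j \<in> I" for i j
  proof (rule integrable_bounded[where C="C i * C j"])
    show "\<bar>F i x * F j x\<bar> \<le> C i * C j" for x
      unfolding abs_mult using C that by (intro mult_mono) (auto intro: order_trans[OF abs_ge_zero])
  qed (use meas that in simp)
  have "(\<integral>x. (\<Sum>i\<in>I. F i x)\<^sup>2 \<partial>M) = (\<integral>x. (\<Sum>i\<in>I. \<Sum>j\<in>I. F i x * F j x) \<partial>M)"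
    by (simp add: power2_eq_square sum_product)
  also have "\<dots> = (\<Sum>i\<in>I. \<Sum>j\<in>I. \<integral>x. F i x * F j x \<partial>M)"
    using int by (simp add: Bochner_Integration.integral_sum integrable_sum)
  finally show ?thesis .
qed

lemma AE_LIMSEQ_0_of_summable_integral:
  fixes M :: "'a measure" and V :: "nat \<Rightarrow> 'a \<Rightarrow> real"
  assumes meas: "\<And>r. V r \<in> borel_measurable M" and nonneg: "\<And>r x. 0 \<le> V r x"
    and int: "\<And>r. integrable M (V r)" and le: "\<And>r. (\<integral>x. V r x \<partial>M) \<le> b r"
    and summable: "summable b"
  shows "AE x in M. (\<lambda>r. V r x) \<longlonglongrightarrow> 0"
proof -
  have b: "0 \<le> b r" for r
    using le[of r] integral_nonneg_AE[of "V r" M] nonneg by fastforce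
  have "(\<integral>\<^sup>+x. (\<Sum>r. ennreal (V r x)) \<partial>M) = (\<Sum>r. \<integral>\<^sup>+x. ennreal (V r x) \<partial>M)"
    using meas by (intro nn_integral_suminf) measurable
  also have "\<dots> = (\<Sum>r. ennreal (\<integral>x. V r x \<partial>M))"
    using int nonneg by (intro suminf_cong nn_integral_eq_integral) auto
  also have "\<dots> \<le> (\<Sum>r. ennreal (b r))"
    using le by (intro suminf_le ennreal_leI) auto
  also have "\<dots> = ennreal (\<Sum>r. b r)"
    using summable b by (intro suminf_ennreal2) auto
  also have "\<dots> < \<infinity>" by simp
  finally have "(\<integral>\<^sup>+x. (\<Sum>r. ennreal (V r x)) \<partial>M) \<noteq> \<infinity>" by simp
  then have "AE x in M. (\<Sum>r. ennreal (V r x)) \<noteq> \<infinity>"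
    using meas by (intro nn_integral_PInf_AE) measurable
  then show ?thesis
  proof (rule AE_mp, intro AE_I2 impI)
    fix x assume "(\<Sum>r. ennreal (V r x)) \<noteq> \<infinity>"
    then have "summable (\<lambda>r. V r x)" using nonneg by (intro summable_suminf_not_top) simp_all
    then show "(\<lambda>r. V r x) \<longlonglongrightarrow> 0" by (rule summable_LIMSEQ_zero)
  qed
qed

lemma
  assumes "T_transition P"
  shows prob_space_kernel: "prob_space (P x)" and sets_kernel: "sets (P x) = sets S2"
proof -
  have "P x \<in> space (prob_algebra S2)"
    using assms unfolding T_transition_def by (rule measurable_space) simp
  then show "prob_space (P x)" "sets (P x) = sets S2" unfolding space_prob_algebra by simp_all
qed

lemma kernel_subprob_measurable:
  "T_transition P \<Longrightarrow> P \<in> measurable borel (subprob_algebra S2)"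
  unfolding T_transition_def by (rule measurable_prob_algebraD)

lemma Pop_measurable:
  assumes P: "T_transition P" and f[measurable]: "f \<in> borel_measurable S3"
  shows "Pop P f \<in> borel_measurable borel"
proof -
  note integral_measurable_subprob_algebra[measurable] measurable_distr2[measurable]
    kernel_subprob_measurable[OF P, measurable]
  have "(\<lambda>x. integral\<^sup>L (distr (P x) (borel \<Otimes>\<^sub>M S2) (\<lambda>y. (x, y))) f) \<in> borel_measurable borel"
    by measurable
  then show ?thesis
    by (rule measurable_cong[THEN iffD1, rotated]) (simp add: integral_distr Pop_def)
qed

lemma Qop_measurable:
  assumes P: "T_transition P" and g[measurable]: "g \<in> borel_measurable borel"
  shows "Qop P g \<in> borel_measurable borel"
proof -
  note kernel_subprob_measurable[OF P, measurable]
  have "(\<lambda>x. \<integral>yz. g (fst yz) \<partial>(P x)) \<in> borel_measurable borel"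
    "(\<lambda>x. \<integral>yz. g (snd yz) \<partial>(P x)) \<in> borel_measurable borel"
    by (rule measurable_compose[OF _ integral_measurable_subprob_algebra], measurable)+
  then show ?thesis unfolding Qop_def by measurable
qed

lemma Qop_pow_measurable:
  "T_transition P \<Longrightarrow> g \<in> borel_measurable borel \<Longrightarrow> (Qop P ^^ j) g \<in> borel_measurable borel"
  by (induction j) (auto intro: Qop_measurable)

lemma Pop_abs_le:
  assumes P: "T_transition P" and f: "f \<in> borel_measurable S3" "\<And>t. \<bar>f t\<bar> \<le> C"
  shows "\<bar>Pop P f x\<bar> \<le> C"
proof -
  interpret prob_space "P x" by (rule prob_space_kernel[OF P])
  have "(\<lambda>yz. f (x, yz)) \<in> borel_measurable (P x)"
    unfolding measurable_cong_sets[OF sets_kernel[OF P] refl] using f(1) by measurable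
  then have "\<bar>Pop P f x\<bar> \<le> (\<integral>yz. C \<partial>(P x))"
    unfolding Pop_def using f(2) order_trans[OF abs_ge_zero f(2)]
    by (intro order_trans[OF integral_abs_bound] integral_mono integrable_bounded[where C=C]) auto
  then show ?thesis by (simp add: prob_space)
qed

lemma Pop_fst: "T_transition P \<Longrightarrow> Pop P (\<lambda>t. f (fst t)) x = f x"
  using prob_space.prob_space[OF prob_space_kernel[of P x]] by (simp add: Pop_def)

lemma Pop_const: "T_transition P \<Longrightarrow> Pop P (\<lambda>_. c) x = c"
  using Pop_fst[of P "\<lambda>_. c"] by simp

lemma Pop_daughters:
  assumes P: "T_transition P" and u[measurable]: "u \<in> borel_measurable borel" "\<And>x. \<bar>u x\<bar> \<le> C"
  shows "Pop P (\<lambda>(x, y, z). u y + u z) x = 2 * Qop P u x"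
proof -
  interpret prob_space "P x" by (rule prob_space_kernel[OF P])
  have "(\<lambda>yz. u (fst yz)) \<in> borel_measurable (P x)" "(\<lambda>yz. u (snd yz)) \<in> borel_measurable (P x)"
    unfolding measurable_cong_sets[OF sets_kernel[OF P] refl] by measurable
  then have "integrable (P x) (\<lambda>yz. u (fst yz))" "integrable (P x) (\<lambda>yz. u (snd yz))"
    using u(2) by (auto intro: integrable_bounded)
  then show ?thesis unfolding Pop_def Qop_def by (simp add: split_beta)
qed

subsection \<open>Second moments along the generations\<close>

locale bifurcating_markov_chain = prob_space M for M :: "'b measure" +
  fixes X :: "nat \<Rightarrow> 'b \<Rightarrow> 'a::metric_space" and P :: "'a \<Rightarrow> ('a \<times> 'a) measure"
    and \<nu> :: "'a measure"
  assumes transition: "T_transition P" and BMC: "BMC M X \<nu> P"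
begin

lemma X_measurable [measurable]: "X n \<in> borel_measurable M"
  using BMC unfolding BMC_def by auto

lemma sigma_finite_subalgebra_nat_filtr: "sigma_finite_subalgebra M (nat_filtr M X r)"
proof -
  let ?G = "{X i -` B \<inter> space M | i B. i \<in> tree_upto r \<and> B \<in> sets borel}"
  have "?G \<subseteq> Pow (space M)" "?G \<subseteq> sets M" by auto
  then have "subalgebra M (nat_filtr M X r)"
    unfolding subalgebra_def nat_filtr_def by (simp add: sets.sigma_sets_subset)
  then interpret finite_measure_subalgebra M "nat_filtr M X r"
    by unfold_locales
  show ?thesis by unfold_locales
qed

definition \<Delta> :: "nat \<Rightarrow> 'b \<Rightarrow> 'a \<times> 'a \<times> 'a" where
  "\<Delta> n \<omega> = (X n \<omega>, X (2*n) \<omega>, X (2*n+1) \<omega>)"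

lemma \<Delta>_measurable [measurable]: "\<Delta> n \<in> measurable M S3"
  unfolding \<Delta>_def by measurable

lemma integral_prod_gen:
  assumes fs: "\<And>n. n \<in> gen r \<Longrightarrow> fs n \<in> bounded_meas S3"
  shows "(\<integral>\<omega>. (\<Prod>n\<in>gen r. fs n (\<Delta> n \<omega>)) \<partial>M) = (\<integral>\<omega>. (\<Prod>n\<in>gen r. Pop P (fs n) (X n \<omega>)) \<partial>M)"
proof -
  interpret sigma_finite_subalgebra M "nat_filtr M X r" by (rule sigma_finite_subalgebra_nat_filtr)
  have meas[measurable]: "\<And>n. n \<in> gen r \<Longrightarrow> fs n \<in> borel_measurable S3"
    using fs unfolding bounded_meas_def by auto
  have "\<exists>C. \<forall>t. \<bar>fs n t\<bar> \<le> C" if "n \<in> gen r" for n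
    using fs[OF that] unfolding bounded_meas_def by (simp add: space_pair_measure)
  then obtain C where C: "\<And>n t. n \<in> gen r \<Longrightarrow> \<bar>fs n t\<bar> \<le> C n" by metis
  have "\<bar>\<Prod>n\<in>gen r. fs n (\<Delta> n \<omega>)\<bar> \<le> (\<Prod>n\<in>gen r. C n)" for \<omega>
    unfolding abs_prod using C by (intro prod_mono) auto
  then have int: "integrable M (\<lambda>\<omega>. \<Prod>n\<in>gen r. fs n (\<Delta> n \<omega>))"
    by (intro integrable_bounded borel_measurable_prod) (use meas in simp_all)
  have "(\<lambda>\<omega>. \<Prod>n\<in>gen r. Pop P (fs n) (X n \<omega>)) \<in> borel_measurable M"
    using Pop_measurable[OF transition meas] by (intro borel_measurable_prod) simp
  moreover have "AE \<omega> in M. real_cond_exp M (nat_filtr M X r) (\<lambda>\<omega>. \<Prod>n\<in>gen r. fs n (\<Delta> n \<omega>)) \<omega>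
      = (\<Prod>n\<in>gen r. Pop P (fs n) (X n \<omega>))"
    using BMC fs unfolding BMC_def \<Delta>_def by blast
  ultimately have "(\<integral>\<omega>. real_cond_exp M (nat_filtr M X r) (\<lambda>\<omega>. \<Prod>n\<in>gen r. fs n (\<Delta> n \<omega>)) \<omega> \<partial>M)
      = (\<integral>\<omega>. (\<Prod>n\<in>gen r. Pop P (fs n) (X n \<omega>)) \<partial>M)"
    by (intro integral_cong_AE) auto
  then show ?thesis using real_cond_exp_int(2)[OF int] by simp
qed

lemma integral_mult_gen:
  assumes ab: "a \<in> gen r" "b \<in> gen r" "a \<noteq> b"
    and uv: "u \<in> bounded_meas S3" "v \<in> bounded_meas S3"
  shows "(\<integral>\<omega>. u (\<Delta> a \<omega>) * v (\<Delta> b \<omega>) \<partial>M) = (\<integral>\<omega>. Pop P u (X a \<omega>) * Pop P v (X b \<omega>) \<partial>M)"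
proof -
  define fs where "fs n = (if n = a then u else if n = b then v else (\<lambda>_. 1))" for n
  have "fs n \<in> bounded_meas S3" for n
    using uv unfolding fs_def bounded_meas_def by auto
  moreover have prod_fs: "(\<Prod>n\<in>gen r. h n (fs n)) = h a u * h b v"
    if "\<And>n. h n (\<lambda>_. 1) = 1" for h :: "nat \<Rightarrow> ('a \<times> 'a \<times> 'a \<Rightarrow> real) \<Rightarrow> real"
    using ab that by (simp add: fs_def if_distrib prod.delta_remove)
  moreover have "(\<Prod>n\<in>gen r. fs n (\<Delta> n \<omega>)) = u (\<Delta> a \<omega>) * v (\<Delta> b \<omega>)" for \<omega>
    using prod_fs[of "\<lambda>n f. f (\<Delta> n \<omega>)"] by simp
  moreover have "(\<Prod>n\<in>gen r. Pop P (fs n) (X n \<omega>)) = Pop P u (X a \<omega>) * Pop P v (X b \<omega>)" for \<omega>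
    using prod_fs[of "\<lambda>n f. Pop P f (X n \<omega>)"] Pop_const[OF transition] by simp
  ultimately show ?thesis
    using integral_prod_gen[of r fs] by simp
qed

text \<open>Distinct vertices of one generation are decoupled by the Markov property, so the
  cross terms of \<open>(\<Sum> v(\<Delta>\<^sub>l))\<^sup>2\<close> and \<open>(\<Sum> Pv(X\<^sub>l))\<^sup>2\<close> coincide; only the diagonal differs.\<close>

lemma integral_square_sum_gen_le:
  assumes v[measurable]: "v \<in> borel_measurable S3" and v_le: "\<And>t. \<bar>v t\<bar> \<le> b"
  shows "(\<integral>\<omega>. (\<Sum>l\<in>gen q. v (\<Delta> l \<omega>))\<^sup>2 \<partial>M)
    \<le> 2^q * b\<^sup>2 + (\<integral>\<omega>. (\<Sum>l\<in>gen q. Pop P v (X l \<omega>))\<^sup>2 \<partial>M)"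
proof -
  have v_bm: "v \<in> bounded_meas S3" unfolding bounded_meas_def using v v_le by blast
  have Pv[measurable]: "Pop P v \<in> borel_measurable borel" by (rule Pop_measurable[OF transition v])
  have Pv_le: "\<bar>Pop P v x\<bar> \<le> b" for x by (rule Pop_abs_le[OF transition v v_le])
  have cross: "(\<integral>\<omega>. v (\<Delta> i \<omega>) * v (\<Delta> j \<omega>) \<partial>M)
      \<le> (\<integral>\<omega>. Pop P v (X i \<omega>) * Pop P v (X j \<omega>) \<partial>M) + (if i = j then b\<^sup>2 else 0)"
    if ij: "i \<in> gen q" "j \<in> gen q" for i j
  proof (cases "i = j")
    case True
    have "(\<integral>\<omega>. v (\<Delta> i \<omega>) * v (\<Delta> j \<omega>) \<partial>M) \<le> (\<integral>\<omega>. b\<^sup>2 \<partial>M)"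
      using v_le mult_le_square_of_abs_le
      by (intro integral_mono integrable_bounded[where C="b\<^sup>2"]) (auto simp: abs_mult)
    moreover have "0 \<le> (\<integral>\<omega>. Pop P v (X i \<omega>) * Pop P v (X j \<omega>) \<partial>M)"
      using True by (auto intro!: integral_nonneg_AE)
    ultimately have "(\<integral>\<omega>. v (\<Delta> i \<omega>) * v (\<Delta> j \<omega>) \<partial>M)
        \<le> (\<integral>\<omega>. Pop P v (X i \<omega>) * Pop P v (X j \<omega>) \<partial>M) + b\<^sup>2"
      by (simp add: prob_space)
    then show ?thesis using True by simp
  qed (simp add: integral_mult_gen[OF ij _ v_bm v_bm])
  have Pv_square: "(\<integral>\<omega>. (\<Sum>l\<in>gen q. Pop P v (X l \<omega>))\<^sup>2 \<partial>M)
      = (\<Sum>i\<in>gen q. \<Sum>j\<in>gen q. \<integral>\<omega>. Pop P v (X i \<omega>) * Pop P v (X j \<omega>) \<partial>M)"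
    by (intro integral_square_sum) (auto intro!: exI[of _ b] Pv_le)
  have "(\<integral>\<omega>. (\<Sum>l\<in>gen q. v (\<Delta> l \<omega>))\<^sup>2 \<partial>M)
      = (\<Sum>i\<in>gen q. \<Sum>j\<in>gen q. \<integral>\<omega>. v (\<Delta> i \<omega>) * v (\<Delta> j \<omega>) \<partial>M)"
    by (intro integral_square_sum) (auto intro!: exI[of _ b] v_le)
  also have "\<dots> \<le> (\<Sum>i\<in>gen q. \<Sum>j\<in>gen q.
      (\<integral>\<omega>. Pop P v (X i \<omega>) * Pop P v (X j \<omega>) \<partial>M) + (if i = j then b\<^sup>2 else 0))"
    by (intro sum_mono cross)
  also have "\<dots> = 2^q * b\<^sup>2 + (\<integral>\<omega>. (\<Sum>l\<in>gen q. Pop P v (X l \<omega>))\<^sup>2 \<partial>M)"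
    by (simp add: Pv_square sum.distrib card_gen)
  finally show ?thesis .
qed

lemma integral_square_sum_gen_Suc_le:
  assumes u[measurable]: "u \<in> borel_measurable borel" and u_le: "\<And>x. \<bar>u x\<bar> \<le> b"
  shows "(\<integral>\<omega>. (\<Sum>a\<in>gen (Suc q). u (X a \<omega>))\<^sup>2 \<partial>M)
    \<le> 2^q * (2*b)\<^sup>2 + 4 * (\<integral>\<omega>. (\<Sum>l\<in>gen q. Qop P u (X l \<omega>))\<^sup>2 \<partial>M)"
proof -
  define v where "v = (\<lambda>(x::'a, y::'a, z::'a). u y + u z)"
  have v[measurable]: "v \<in> borel_measurable S3" unfolding v_def by measurable
  have v_le: "\<bar>v t\<bar> \<le> 2*b" for t
  proof (cases t)
    case (fields x y z)
    then show ?thesis using u_le[of y] u_le[of z] unfolding v_def by simp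
  qed
  have "(\<Sum>a\<in>gen (Suc q). u (X a \<omega>)) = (\<Sum>l\<in>gen q. v (\<Delta> l \<omega>))" for \<omega>
    unfolding sum_gen_Suc v_def \<Delta>_def by simp
  moreover have "(\<Sum>l\<in>gen q. Pop P v (X l \<omega>))\<^sup>2 = 4 * (\<Sum>l\<in>gen q. Qop P u (X l \<omega>))\<^sup>2" for \<omega>
    unfolding v_def Pop_daughters[OF transition u u_le]
    by (simp add: sum_distrib_left[symmetric] power_mult_distrib)
  ultimately show ?thesis using integral_square_sum_gen_le[OF v v_le, of q] by simp
qed

text \<open>Iterating the previous bound along \<open>Q\<^sup>j g\<close>, the geometric decay \<open>\<alpha>\<^sup>2\<close> of the
  second term wins against the factor \<open>4\<close>, leaving growth \<open>(2(1+\<alpha>\<^sup>2))\<^sup>q = o(4\<^sup>q)\<close>.\<close>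

lemma integral_square_sum_gen_Qop_pow_le:
  assumes g: "g \<in> borel_measurable borel"
    and decay: "\<And>j x. \<bar>(Qop P ^^ j) g x\<bar> \<le> c * \<alpha>^j" and \<alpha>: "0 < \<alpha>" "\<alpha> < 1"
  shows "(\<integral>\<omega>. (\<Sum>a\<in>gen q. (Qop P ^^ j) g (X a \<omega>))\<^sup>2 \<partial>M)
    \<le> c\<^sup>2 * \<alpha>^(2*j) * (2 / (1 - \<alpha>\<^sup>2)) * (2 * (1 + \<alpha>\<^sup>2))^q"
proof -
  define A where "A = 2 / (1 - \<alpha>\<^sup>2)"
  define G where "G = 2 * (1 + \<alpha>\<^sup>2)"
  have "\<alpha>\<^sup>2 < 1" using \<alpha> by (simp add: power_less_one_iff)
  \<comment> \<open>\<open>A\<close> is the solution of \<open>4 (1 + \<alpha>\<^sup>2 A) = A G\<close>, which makes the induction close\<close>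
  then have A: "1 \<le> A" "1 + \<alpha>\<^sup>2 * A = A * G / 4"
    unfolding A_def G_def by (simp_all add: field_simps)
  have Qj[measurable]: "(Qop P ^^ j) g \<in> borel_measurable borel" for j
    by (rule Qop_pow_measurable[OF transition g])
  have sq_decay: "((Qop P ^^ j) g x)\<^sup>2 \<le> c\<^sup>2 * \<alpha>^(2*j)" for j x
    using power_mono[OF decay[of j x], of 2] abs_ge_zero[of "(Qop P ^^ j) g x"]
    by (simp add: power_mult_distrib power_mult mult.commute)
  have "(\<integral>\<omega>. (\<Sum>a\<in>gen q. (Qop P ^^ j) g (X a \<omega>))\<^sup>2 \<partial>M) \<le> c\<^sup>2 * \<alpha>^(2*j) * A * G^q"
  proof (induction q arbitrary: j)
    case 0
    have "(\<integral>\<omega>. (\<Sum>a\<in>gen 0. (Qop P ^^ j) g (X a \<omega>))\<^sup>2 \<partial>M) \<le> (\<integral>\<omega>. c\<^sup>2 * \<alpha>^(2*j) \<partial>M)"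
      unfolding gen_0 using sq_decay
      by (intro integral_mono integrable_bounded[where C="c\<^sup>2 * \<alpha>^(2*j)"]) auto
    also have "\<dots> \<le> c\<^sup>2 * \<alpha>^(2*j) * A"
      using mult_left_mono[OF A(1), of "c\<^sup>2 * \<alpha>^(2*j)"] by (simp add: prob_space)
    finally show ?case by simp
  next
    case (Suc q)
    have "(2::real)^q \<le> G^q" unfolding G_def by (intro power_mono) auto
    then have "4 * 2^q + 4 * \<alpha>\<^sup>2 * A * G^q \<le> 4 * G^q * (1 + \<alpha>\<^sup>2 * A)"
      by (simp add: algebra_simps)
    also have "\<dots> = A * G^Suc q" unfolding A(2) by simp
    finally have "c\<^sup>2 * \<alpha>^(2*j) * (4 * 2^q + 4 * \<alpha>\<^sup>2 * A * G^q) \<le> c\<^sup>2 * \<alpha>^(2*j) * (A * G^Suc q)"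
      by (intro mult_left_mono) auto
    moreover have "(\<integral>\<omega>. (\<Sum>a\<in>gen (Suc q). (Qop P ^^ j) g (X a \<omega>))\<^sup>2 \<partial>M)
        \<le> 2^q * (2 * (c * \<alpha>^j))\<^sup>2 + 4 * (c\<^sup>2 * \<alpha>^(2 * Suc j) * A * G^q)"
      using integral_square_sum_gen_Suc_le[OF Qj[of j] decay[of j], where q=q] Suc[of "Suc j"] by simp
    ultimately show ?case
      by (simp add: algebra_simps power_mult_distrib power_mult power2_eq_square)
  qed
  then show ?thesis unfolding A_def G_def .
qed

end

subsection \<open>Permutations preserving the generations\<close>

lemma gen_perm_mem: "gen_perm \<sigma> \<Longrightarrow> i \<in> gen q \<Longrightarrow> \<sigma> i \<in> gen q"
  unfolding gen_perm_def bij_betw_def by auto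

lemma gen_perm_inj: "gen_perm \<sigma> \<Longrightarrow> inj_on \<sigma> (gen q)"
  unfolding gen_perm_def bij_betw_def by auto

lemma gen_perm_tree_upto: "gen_perm \<sigma> \<Longrightarrow> i \<in> tree_upto r \<Longrightarrow> \<sigma> i \<in> tree_upto r"
  unfolding tree_upto_def using gen_perm_mem by blast

lemma gen_perm_comp: "gen_perm \<rho> \<Longrightarrow> gen_perm \<sigma> \<Longrightarrow> gen_perm (\<rho> \<circ> \<sigma>)"
  unfolding gen_perm_def using bij_betw_trans by blast

lemma gen_perm_transpose:
  assumes "x \<in> gen q" "y \<in> gen q"
  shows "gen_perm (Transposition.transpose x y)"
  unfolding gen_perm_def
proof
  fix r
  have "x \<in> gen r \<longleftrightarrow> y \<in> gen r" using assms gen_unique by blast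
  then show "bij_betw (Transposition.transpose x y) (gen r) (gen r)"
    using transpose_eq_imp_eq by (auto simp: bij_betw_def inj_on_def)
qed

definition restricted_gen_perms :: "nat \<Rightarrow> (nat \<Rightarrow> nat) set" where
  "restricted_gen_perms r = (\<lambda>\<sigma>. restrict \<sigma> (tree_upto r)) ` Collect gen_perm"

lemma finite_restricted_gen_perms: "finite (restricted_gen_perms r)"
proof (rule finite_subset)
  show "restricted_gen_perms r \<subseteq> PiE (tree_upto r) (\<lambda>_. tree_upto r)"
    unfolding restricted_gen_perms_def using gen_perm_tree_upto by auto
qed (simp add: finite_PiE finite_tree_upto)

text \<open>Composing with a transposition of one generation is a bijection of
  \<open>restricted_gen_perms r\<close> mapping the prescribed values \<open>(a, b)\<close> at \<open>(i, j)\<close> to their images.\<close>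

lemma card_restricted_gen_perms_transpose_le:
  assumes xy: "x \<in> gen q" "y \<in> gen q" and ij: "i \<in> tree_upto r" "j \<in> tree_upto r"
  defines "t \<equiv> Transposition.transpose x y"
  shows "card {\<tau>\<in>restricted_gen_perms r. \<tau> i = a \<and> \<tau> j = b}
    \<le> card {\<tau>\<in>restricted_gen_perms r. \<tau> i = t a \<and> \<tau> j = t b}"
proof (rule card_inj_on_le)
  let ?f = "\<lambda>\<tau>. restrict (t \<circ> \<tau>) (tree_upto r)"
  show "inj_on ?f {\<tau>\<in>restricted_gen_perms r. \<tau> i = a \<and> \<tau> j = b}"
  proof (rule inj_onI)
    fix \<tau> \<tau>' assume \<tau>: "\<tau> \<in> {\<tau>\<in>restricted_gen_perms r. \<tau> i = a \<and> \<tau> j = b}"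
      "\<tau>' \<in> {\<tau>\<in>restricted_gen_perms r. \<tau> i = a \<and> \<tau> j = b}" and eq: "?f \<tau> = ?f \<tau>'"
    have "\<tau> k = \<tau>' k" for k
    proof (cases "k \<in> tree_upto r")
      case True
      then show ?thesis using fun_cong[OF eq, of k] unfolding t_def by (auto dest: transpose_eq_imp_eq)
    next
      case False
      then show ?thesis using \<tau> unfolding restricted_gen_perms_def by auto
    qed
    then show "\<tau> = \<tau>'" by blast
  qed
  show "?f ` {\<tau>\<in>restricted_gen_perms r. \<tau> i = a \<and> \<tau> j = b}
      \<subseteq> {\<tau>\<in>restricted_gen_perms r. \<tau> i = t a \<and> \<tau> j = t b}"
  proof
    fix \<tau>' assume "\<tau>' \<in> ?f ` {\<tau>\<in>restricted_gen_perms r. \<tau> i = a \<and> \<tau> j = b}"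
    then obtain \<sigma> where \<sigma>: "gen_perm \<sigma>" "\<sigma> i = a" "\<sigma> j = b" "\<tau>' = ?f (restrict \<sigma> (tree_upto r))"
      unfolding restricted_gen_perms_def using ij by auto
    have "gen_perm (t \<circ> \<sigma>)" using \<sigma>(1) unfolding t_def by (rule gen_perm_comp[OF gen_perm_transpose[OF xy]])
    moreover have "\<tau>' = restrict (t \<circ> \<sigma>) (tree_upto r)" using \<sigma>(4) by auto
    ultimately show "\<tau>' \<in> {\<tau>\<in>restricted_gen_perms r. \<tau> i = t a \<and> \<tau> j = t b}"
      unfolding restricted_gen_perms_def using \<sigma> ij by auto
  qed
  show "finite {\<tau>\<in>restricted_gen_perms r. \<tau> i = t a \<and> \<tau> j = t b}"
    using finite_restricted_gen_perms by simp
qed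

lemma card_restricted_gen_perms_transpose:
  assumes "x \<in> gen q" "y \<in> gen q" "i \<in> tree_upto r" "j \<in> tree_upto r"
  defines "t \<equiv> Transposition.transpose x y"
  shows "card {\<tau>\<in>restricted_gen_perms r. \<tau> i = t a \<and> \<tau> j = t b}
    = card {\<tau>\<in>restricted_gen_perms r. \<tau> i = a \<and> \<tau> j = b}"
  using card_restricted_gen_perms_transpose_le[OF assms(1-4), of a b]
    card_restricted_gen_perms_transpose_le[OF assms(1-4), of "t a" "t b"]
  unfolding t_def by simp

lemma card_restricted_gen_perms_pair_eq:
  assumes ij: "i \<in> tree_upto r" "j \<in> tree_upto r"
    and ab: "a \<in> gen q" "b \<in> gen q" "a \<noteq> b" and ab': "a' \<in> gen q" "b' \<in> gen q" "a' \<noteq> b'"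
  shows "card {\<tau>\<in>restricted_gen_perms r. \<tau> i = a \<and> \<tau> j = b}
    = card {\<tau>\<in>restricted_gen_perms r. \<tau> i = a' \<and> \<tau> j = b'}"
proof -
  note swap = card_restricted_gen_perms_transpose[OF _ _ ij]
  consider "b' \<noteq> a" | "b' = a" "a' \<noteq> b" | "b' = a" "a' = b" by blast
  then show ?thesis
  proof cases
    case 1
    then show ?thesis
      using swap[OF ab(2) ab'(2), of a b] swap[OF ab(1) ab'(1), of a b'] ab(3) ab'(3) by simp
  next
    case 2
    then show ?thesis
      using swap[OF ab(1) ab'(1), of a b] swap[OF ab(2) ab'(2), of a' b] ab(3) ab'(3) by simp
  next
    case 3
    then show ?thesis using swap[OF ab(1) ab(2), of a b] ab(3) by simp
  qed
qed

definition off_diag :: "'a set \<Rightarrow> ('a \<times> 'a) set" where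
  "off_diag A = Sigma A (\<lambda>a. A - {a})"

lemma finite_off_diag [simp]: "finite A \<Longrightarrow> finite (off_diag A)"
  unfolding off_diag_def by simp

lemma off_diag_mono: "A \<subseteq> B \<Longrightarrow> off_diag A \<subseteq> off_diag B"
  unfolding off_diag_def by auto

lemma card_off_diag: "finite A \<Longrightarrow> card (off_diag A) = card A * (card A - 1)"
  unfolding off_diag_def by (subst card_SigmaI) auto

lemma sum_sum_diag_off_diag:
  assumes "finite A"
  shows "(\<Sum>a\<in>A. \<Sum>b\<in>A. F a b) = (\<Sum>a\<in>A. F a a) + (\<Sum>p\<in>off_diag A. F (fst p) (snd p))"
proof -
  have "(\<Sum>a\<in>A. \<Sum>b\<in>A. F a b) = (\<Sum>a\<in>A. F a a + (\<Sum>b\<in>A - {a}. F a b))"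
    using assms by (intro sum.cong) (simp_all add: sum.remove)
  also have "\<dots> = (\<Sum>a\<in>A. F a a) + (\<Sum>p\<in>off_diag A. F (fst p) (snd p))"
    using assms unfolding off_diag_def by (simp add: sum.distrib sum.Sigma split_beta)
  finally show ?thesis .
qed

lemma sum_sum_const_off_diag:
  assumes "finite A" and const: "\<And>a b. a \<in> A \<Longrightarrow> b \<in> A \<Longrightarrow> a \<noteq> b \<Longrightarrow> F a b = \<kappa>"
  shows "(\<Sum>a\<in>A. \<Sum>b\<in>A. F a b) = (\<Sum>a\<in>A. F a a) + real (card A) * (real (card A) - 1) * \<kappa>"
proof -
  have "(\<Sum>p\<in>off_diag A. F (fst p) (snd p)) = (\<Sum>p\<in>off_diag A. \<kappa>)"
    by (intro sum.cong refl) (auto simp: off_diag_def intro!: const)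
  also have "\<dots> = real (card A) * (real (card A) - 1) * \<kappa>"
    using assms(1) by (cases "card A") (simp_all add: card_off_diag algebra_simps)
  finally show ?thesis by (simp add: sum_sum_diag_off_diag[OF assms(1)])
qed

subsection \<open>Sums along the random permutation\<close>

locale bmc_random_perm = bifurcating_markov_chain M X P \<nu>
  for M :: "'b measure" and X :: "nat \<Rightarrow> 'b \<Rightarrow> 'a::metric_space" and P \<nu> +
  fixes \<pi> :: "'b \<Rightarrow> nat \<Rightarrow> nat"
  assumes uniform: "uniform_gen_perm M \<pi> X"
begin

lemma gen_perm_\<pi>: "\<omega> \<in> space M \<Longrightarrow> gen_perm (\<pi> \<omega>)"
  using uniform unfolding uniform_gen_perm_def by auto

lemma \<pi>_apply_measurable [measurable]: "(\<lambda>\<omega>. \<pi> \<omega> i) \<in> measurable M (count_space UNIV)"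
  using uniform unfolding uniform_gen_perm_def by auto

lemma \<pi>_measurable [measurable]: "\<pi> \<in> measurable M (Pi\<^sub>M UNIV (\<lambda>_. count_space UNIV))"
proof -
  have "(\<lambda>\<omega> i. \<pi> \<omega> i) \<in> measurable M (Pi\<^sub>M UNIV (\<lambda>_. count_space UNIV))"
    by (rule measurable_PiM_single') auto
  then show ?thesis by simp
qed

definition path :: "'b \<Rightarrow> nat \<Rightarrow> 'a" where
  "path \<omega> = (\<lambda>n. X n \<omega>)"

lemma path_measurable [measurable]: "path \<in> measurable M (Pi\<^sub>M UNIV (\<lambda>_. borel))"
  unfolding path_def by (rule measurable_PiM_single') auto

lemma indep_var_comp_\<pi>_path:
  fixes g :: "(nat \<Rightarrow> nat) \<Rightarrow> real" and h :: "(nat \<Rightarrow> 'a) \<Rightarrow> real"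
  assumes g[measurable]: "g \<in> borel_measurable (Pi\<^sub>M UNIV (\<lambda>_. count_space UNIV))"
    and h[measurable]: "h \<in> borel_measurable (Pi\<^sub>M UNIV (\<lambda>_. borel))"
  shows "indep_var borel (g \<circ> \<pi>) borel (h \<circ> path)"
proof -
  let ?M\<pi> = "Pi\<^sub>M UNIV (\<lambda>_. count_space UNIV) :: (nat \<Rightarrow> nat) measure"
  let ?MX = "Pi\<^sub>M UNIV (\<lambda>_. borel) :: (nat \<Rightarrow> 'a) measure"
  let ?C\<pi> = "{\<pi> -` B \<inter> space M | B. B \<in> sets ?M\<pi>}"
  let ?CX = "{path -` B \<inter> space M | B. B \<in> sets ?MX}"
  have indep: "indep_sets (case_bool ?C\<pi> ?CX) UNIV"
    using uniform unfolding uniform_gen_perm_def path_def indep_set_def by auto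
  have "(g \<circ> \<pi>) -` A \<inter> space M \<in> ?C\<pi>" if "A \<in> sets borel" for A
  proof -
    have "(g \<circ> \<pi>) -` A \<inter> space M = \<pi> -` (g -` A \<inter> space ?M\<pi>) \<inter> space M"
      using measurable_space[OF \<pi>_measurable] by auto
    moreover have "g -` A \<inter> space ?M\<pi> \<in> sets ?M\<pi>" using that by measurable
    ultimately show ?thesis by blast
  qed
  moreover have "(h \<circ> path) -` A \<inter> space M \<in> ?CX" if "A \<in> sets borel" for A
  proof -
    have "(h \<circ> path) -` A \<inter> space M = path -` (h -` A \<inter> space ?MX) \<inter> space M"
      using measurable_space[OF path_measurable] by auto
    moreover have "h -` A \<inter> space ?MX \<in> sets ?MX" using that by measurable
    ultimately show ?thesis by blast
  qed
  ultimately have "indep_sets (\<lambda>i. {case_bool (g \<circ> \<pi>) (h \<circ> path) i -` A \<inter> space M | A.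
      A \<in> sets (case_bool borel borel i)}) UNIV"
    by (intro indep_sets_mono_sets[OF indep]) (auto split: bool.split)
  then show ?thesis
    unfolding indep_var_def indep_vars_def2 by (auto split: bool.split)
qed

lemma integral_mult_indep_\<pi>_path:
  fixes g :: "(nat \<Rightarrow> nat) \<Rightarrow> real" and h :: "(nat \<Rightarrow> 'a) \<Rightarrow> real"
  assumes g[measurable]: "g \<in> borel_measurable (Pi\<^sub>M UNIV (\<lambda>_. count_space UNIV))" "\<And>s. \<bar>g s\<bar> \<le> C"
    and h[measurable]: "h \<in> borel_measurable (Pi\<^sub>M UNIV (\<lambda>_. borel))" "\<And>x. \<bar>h x\<bar> \<le> D"
  shows "(\<integral>\<omega>. g (\<pi> \<omega>) * h (path \<omega>) \<partial>M) = (\<integral>\<omega>. g (\<pi> \<omega>) \<partial>M) * (\<integral>\<omega>. h (path \<omega>) \<partial>M)"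
proof -
  have "integrable M (\<lambda>\<omega>. g (\<pi> \<omega>))" by (rule integrable_bounded[OF _ g(2)]) measurable
  moreover have "integrable M (\<lambda>\<omega>. h (path \<omega>))" by (rule integrable_bounded[OF _ h(2)]) measurable
  ultimately show ?thesis
    using indep_var_lebesgue_integral[OF indep_var_comp_\<pi>_path[OF g(1) h(1)]]
    by (simp add: comp_def)
qed

lemma
  assumes "\<tau> \<in> restricted_gen_perms r"
  shows sets_\<pi>_restrict: "{\<omega>\<in>space M. restrict (\<pi> \<omega>) (tree_upto r) = \<tau>} \<in> sets M"
    and prob_\<pi>_restrict: "prob {\<omega>\<in>space M. restrict (\<pi> \<omega>) (tree_upto r) = \<tau>} = 1 / (\<Prod>q\<le>r. fact (2^q))"
proof -
  obtain \<sigma> where \<sigma>: "\<tau> = restrict \<sigma> (tree_upto r)" "gen_perm \<sigma>"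
    using assms unfolding restricted_gen_perms_def by auto
  have eq: "{\<omega>\<in>space M. restrict (\<pi> \<omega>) (tree_upto r) = \<tau>} = {\<omega>\<in>space M. \<forall>k\<in>tree_upto r. \<pi> \<omega> k = \<sigma> k}"
    unfolding \<sigma>(1) by (force simp: fun_eq_iff restrict_def)
  have "Measurable.pred M (\<lambda>\<omega>. \<forall>k\<in>tree_upto r. \<pi> \<omega> k = \<sigma> k)"
    using finite_tree_upto by measurable
  then show "{\<omega>\<in>space M. restrict (\<pi> \<omega>) (tree_upto r) = \<tau>} \<in> sets M"
    unfolding eq by (simp add: pred_def)
  show "prob {\<omega>\<in>space M. restrict (\<pi> \<omega>) (tree_upto r) = \<tau>} = 1 / (\<Prod>q\<le>r. fact (2^q))"
    unfolding eq using uniform \<sigma>(2) unfolding uniform_gen_perm_def by auto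
qed

lemma prob_\<pi>_pair_card:
  assumes ij: "i \<in> tree_upto r" "j \<in> tree_upto r"
  shows "prob {\<omega>\<in>space M. \<pi> \<omega> i = a \<and> \<pi> \<omega> j = b}
    = card {\<tau>\<in>restricted_gen_perms r. \<tau> i = a \<and> \<tau> j = b} / (\<Prod>q\<le>r. fact (2^q))"
proof -
  let ?A = "{\<tau>\<in>restricted_gen_perms r. \<tau> i = a \<and> \<tau> j = b}"
  let ?E = "\<lambda>\<tau>. {\<omega>\<in>space M. restrict (\<pi> \<omega>) (tree_upto r) = \<tau>}"
  have "{\<omega>\<in>space M. \<pi> \<omega> i = a \<and> \<pi> \<omega> j = b} = (\<Union>\<tau>\<in>?A. ?E \<tau>)"
  proof (intro set_eqI iffI)
    fix \<omega> assume \<omega>: "\<omega> \<in> {\<omega>\<in>space M. \<pi> \<omega> i = a \<and> \<pi> \<omega> j = b}"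
    then have "restrict (\<pi> \<omega>) (tree_upto r) \<in> ?A"
      using ij gen_perm_\<pi> unfolding restricted_gen_perms_def by auto
    then show "\<omega> \<in> (\<Union>\<tau>\<in>?A. ?E \<tau>)" using \<omega> by auto
  next
    fix \<omega> assume "\<omega> \<in> (\<Union>\<tau>\<in>?A. ?E \<tau>)"
    then obtain \<tau> where "\<tau> \<in> ?A" "\<omega> \<in> space M" "restrict (\<pi> \<omega>) (tree_upto r) = \<tau>" by blast
    then show "\<omega> \<in> {\<omega>\<in>space M. \<pi> \<omega> i = a \<and> \<pi> \<omega> j = b}" using ij by auto
  qed
  moreover have "prob (\<Union>\<tau>\<in>?A. ?E \<tau>) = (\<Sum>\<tau>\<in>?A. prob (?E \<tau>))"
    using finite_restricted_gen_perms sets_\<pi>_restrict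
    by (intro finite_measure_finite_Union) (auto simp: disjoint_family_on_def)
  ultimately show ?thesis by (simp add: prob_\<pi>_restrict)
qed

text \<open>By \<open>card_restricted_gen_perms_pair_eq\<close> all off-diagonal pairs of values are equally
  likely, and together they exhaust the probability space.\<close>

lemma prob_\<pi>_pair:
  assumes ij: "i \<in> gen q" "j \<in> gen q" "i \<noteq> j" and ab: "(a, b) \<in> off_diag (gen q)"
  shows "prob {\<omega>\<in>space M. \<pi> \<omega> i = a \<and> \<pi> \<omega> j = b} = 1 / card (off_diag (gen q))"
proof -
  let ?p = "\<lambda>p. prob {\<omega>\<in>space M. \<pi> \<omega> i = fst p \<and> \<pi> \<omega> j = snd p}"
  have ij_tree: "i \<in> tree_upto q" "j \<in> tree_upto q" using ij gen_subset_tree_upto by auto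
  have const: "?p p = ?p (a, b)" if "p \<in> off_diag (gen q)" for p
  proof -
    have "fst p \<in> gen q" "snd p \<in> gen q" "fst p \<noteq> snd p" "a \<in> gen q" "b \<in> gen q" "a \<noteq> b"
      using that ab unfolding off_diag_def by auto
    from card_restricted_gen_perms_pair_eq[OF ij_tree this] show ?thesis
      unfolding prob_\<pi>_pair_card[OF ij_tree] by simp
  qed
  have "space M = (\<Union>p\<in>off_diag (gen q). {\<omega>\<in>space M. \<pi> \<omega> i = fst p \<and> \<pi> \<omega> j = snd p})"
    using gen_perm_mem[OF gen_perm_\<pi>] inj_onD[OF gen_perm_inj[OF gen_perm_\<pi>]] ij
    unfolding off_diag_def by fastforce
  then have "1 = prob (\<Union>p\<in>off_diag (gen q). {\<omega>\<in>space M. \<pi> \<omega> i = fst p \<and> \<pi> \<omega> j = snd p})"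
    using prob_space by simp
  also have "\<dots> = (\<Sum>p\<in>off_diag (gen q). ?p p)"
    by (rule finite_measure_finite_Union) (auto simp: disjoint_family_on_def)
  also have "\<dots> = card (off_diag (gen q)) * ?p (a, b)"
    using const by simp
  finally have "card (off_diag (gen q)) * ?p (a, b) = 1" ..
  then have "real (card (off_diag (gen q))) \<noteq> 0" by auto
  with \<open>card (off_diag (gen q)) * ?p (a, b) = 1\<close> show ?thesis
    by (simp add: nonzero_eq_divide_eq mult.commute)
qed

lemma integral_mult_\<pi>_off_diag:
  fixes \<phi> :: "nat \<Rightarrow> (nat \<Rightarrow> 'a) \<Rightarrow> real"
  assumes \<phi>[measurable]: "\<And>a. \<phi> a \<in> borel_measurable (Pi\<^sub>M UNIV (\<lambda>_. borel))"
    and \<phi>_le: "\<And>a x. \<bar>\<phi> a x\<bar> \<le> K" and ij: "i \<in> gen q" "j \<in> gen q" "i \<noteq> j"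
  shows "(\<integral>\<omega>. \<phi> (\<pi> \<omega> i) (path \<omega>) * \<phi> (\<pi> \<omega> j) (path \<omega>) \<partial>M)
    = (\<Sum>p\<in>off_diag (gen q). \<integral>\<omega>. \<phi> (fst p) (path \<omega>) * \<phi> (snd p) (path \<omega>) \<partial>M)
      / card (off_diag (gen q))"
proof -
  define ind where "ind p \<sigma> = (if (\<sigma> i, \<sigma> j) = p then 1 else 0 :: real)" for p and \<sigma> :: "nat \<Rightarrow> nat"
  define h where "h p x = \<phi> (fst p) x * \<phi> (snd p) x" for p x
  have ind[measurable]: "ind p \<in> borel_measurable (Pi\<^sub>M UNIV (\<lambda>_. count_space UNIV))" for p
    unfolding ind_def by measurable
  have h[measurable]: "h p \<in> borel_measurable (Pi\<^sub>M UNIV (\<lambda>_. borel))" for p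
    unfolding h_def by measurable
  have ind_le: "\<bar>ind p \<sigma>\<bar> \<le> 1" for p \<sigma> unfolding ind_def by auto
  have h_le: "\<bar>h p x\<bar> \<le> K * K" for p x
    unfolding h_def abs_mult using \<phi>_le by (intro mult_mono) (auto intro: order_trans[OF abs_ge_zero])
  have "(\<pi> \<omega> i, \<pi> \<omega> j) \<in> off_diag (gen q)" if "\<omega> \<in> space M" for \<omega>
    using gen_perm_mem[OF gen_perm_\<pi>[OF that]] inj_onD[OF gen_perm_inj[OF gen_perm_\<pi>[OF that]]] ij
    unfolding off_diag_def by auto
  moreover have "(\<Sum>p\<in>off_diag (gen q). ind p (\<pi> \<omega>) * h p (path \<omega>))
      = (\<Sum>p\<in>off_diag (gen q). if (\<pi> \<omega> i, \<pi> \<omega> j) = p then h p (path \<omega>) else 0)" for \<omega>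
    by (intro sum.cong) (simp_all add: ind_def)
  ultimately have "\<phi> (\<pi> \<omega> i) (path \<omega>) * \<phi> (\<pi> \<omega> j) (path \<omega>)
      = (\<Sum>p\<in>off_diag (gen q). ind p (\<pi> \<omega>) * h p (path \<omega>))" if "\<omega> \<in> space M" for \<omega>
    using that by (simp add: h_def)
  then have "(\<integral>\<omega>. \<phi> (\<pi> \<omega> i) (path \<omega>) * \<phi> (\<pi> \<omega> j) (path \<omega>) \<partial>M)
      = (\<integral>\<omega>. (\<Sum>p\<in>off_diag (gen q). ind p (\<pi> \<omega>) * h p (path \<omega>)) \<partial>M)"
    by (intro Bochner_Integration.integral_cong) auto
  also have "\<dots> = (\<Sum>p\<in>off_diag (gen q). \<integral>\<omega>. ind p (\<pi> \<omega>) * h p (path \<omega>) \<partial>M)"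
  proof (intro Bochner_Integration.integral_sum integrable_bounded[where C="K * K"])
    show "\<bar>ind p (\<pi> \<omega>) * h p (path \<omega>)\<bar> \<le> K * K" for p \<omega>
      using h_le[of p "path \<omega>"] unfolding ind_def by auto
  qed measurable
  also have "\<dots> = (\<Sum>p\<in>off_diag (gen q). (\<integral>\<omega>. ind p (\<pi> \<omega>) \<partial>M) * (\<integral>\<omega>. h p (path \<omega>) \<partial>M))"
    by (intro sum.cong refl integral_mult_indep_\<pi>_path[OF ind ind_le h h_le])
  also have "\<dots> = (\<Sum>p\<in>off_diag (gen q). (\<integral>\<omega>. h p (path \<omega>) \<partial>M) / card (off_diag (gen q)))"
  proof (intro sum.cong refl)
    fix p assume p: "p \<in> off_diag (gen q)"
    have "(\<integral>\<omega>. ind p (\<pi> \<omega>) \<partial>M)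
        = (\<integral>\<omega>. indicator {\<omega>\<in>space M. \<pi> \<omega> i = fst p \<and> \<pi> \<omega> j = snd p} \<omega> \<partial>M)"
      by (intro Bochner_Integration.integral_cong) (auto simp: ind_def indicator_def)
    also have "\<dots> = prob {\<omega>\<in>space M. \<pi> \<omega> i = fst p \<and> \<pi> \<omega> j = snd p}"
      by (simp add: Int_absorb2)
    also have "\<dots> = 1 / card (off_diag (gen q))" using p by (intro prob_\<pi>_pair[OF ij]) simp
    finally show "(\<integral>\<omega>. ind p (\<pi> \<omega>) \<partial>M) * (\<integral>\<omega>. h p (path \<omega>) \<partial>M)
      = (\<integral>\<omega>. h p (path \<omega>) \<partial>M) / card (off_diag (gen q))" by simp
  qed
  finally show ?thesis by (simp add: h_def sum_divide_distrib)
qed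

text \<open>Each off-diagonal correlation of the permuted sum equals the mean off-diagonal correlation
  of the whole generation, and the permuted sum has no more off-diagonal terms than the full one.\<close>

lemma integral_square_sum_\<pi>_le:
  fixes \<phi> :: "nat \<Rightarrow> (nat \<Rightarrow> 'a) \<Rightarrow> real" and K :: real
  assumes \<phi>[measurable]: "\<And>a. \<phi> a \<in> borel_measurable (Pi\<^sub>M UNIV (\<lambda>_. borel))"
    and \<phi>_le: "\<And>a x. \<bar>\<phi> a x\<bar> \<le> K" and I: "I \<subseteq> gen q"
  shows "(\<integral>\<omega>. (\<Sum>i\<in>I. \<phi> (\<pi> \<omega> i) (path \<omega>))\<^sup>2 \<partial>M)
    \<le> card I * K\<^sup>2 + (\<integral>\<omega>. (\<Sum>a\<in>gen q. \<phi> a (path \<omega>))\<^sup>2 \<partial>M)"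
proof -
  have fin: "finite I" using finite_subset[OF I finite_gen] .
  define F where "F a b = (\<integral>\<omega>. \<phi> a (path \<omega>) * \<phi> b (path \<omega>) \<partial>M)" for a b
  define \<kappa> where "\<kappa> = (\<Sum>p\<in>off_diag (gen q). F (fst p) (snd p)) / card (off_diag (gen q))"
  have meas_Z: "(\<lambda>\<omega>. \<phi> (\<pi> \<omega> i) (path \<omega>)) \<in> borel_measurable M" for i
    by (rule measurable_compose_countable[where g="\<lambda>\<omega>. \<pi> \<omega> i"]) auto
  have "card (off_diag (gen q)) * \<kappa> = (\<Sum>p\<in>off_diag (gen q). F (fst p) (snd p))"
    unfolding \<kappa>_def using finite_off_diag[OF finite_gen, of q]
    by (cases "card (off_diag (gen q)) = 0") simp_all
  then have full: "(\<integral>\<omega>. (\<Sum>a\<in>gen q. \<phi> a (path \<omega>))\<^sup>2 \<partial>M)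
      = (\<Sum>a\<in>gen q. F a a) + card (off_diag (gen q)) * \<kappa>"
    unfolding F_def using \<phi>_le
    by (subst integral_square_sum) (auto simp: sum_sum_diag_off_diag)
  have diag: "(\<integral>\<omega>. \<phi> (\<pi> \<omega> i) (path \<omega>) * \<phi> (\<pi> \<omega> i) (path \<omega>) \<partial>M) \<le> K\<^sup>2" for i
  proof -
    have "(\<integral>\<omega>. \<phi> (\<pi> \<omega> i) (path \<omega>) * \<phi> (\<pi> \<omega> i) (path \<omega>) \<partial>M) \<le> (\<integral>\<omega>. K\<^sup>2 \<partial>M)"
      using meas_Z \<phi>_le mult_le_square_of_abs_le
      by (intro integral_mono integrable_bounded[where C="K\<^sup>2"]) (auto simp: abs_mult)
    then show ?thesis by (simp add: prob_space)
  qed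
  have "card (off_diag I) * \<kappa> \<le> card (off_diag (gen q)) * \<kappa>" if "0 \<le> \<kappa>"
    using that card_mono[OF finite_off_diag[OF finite_gen] off_diag_mono[OF I]]
    by (intro mult_right_mono) auto
  moreover have "0 \<le> (\<Sum>a\<in>gen q. F a a)" unfolding F_def by (auto intro!: sum_nonneg)
  moreover have "0 \<le> (\<integral>\<omega>. (\<Sum>a\<in>gen q. \<phi> a (path \<omega>))\<^sup>2 \<partial>M)" by simp
  ultimately have off: "card (off_diag I) * \<kappa> \<le> (\<integral>\<omega>. (\<Sum>a\<in>gen q. \<phi> a (path \<omega>))\<^sup>2 \<partial>M)"
    unfolding full by (smt (verit) mult_nonneg_nonpos of_nat_0_le_iff)
  have "(\<integral>\<omega>. (\<Sum>i\<in>I. \<phi> (\<pi> \<omega> i) (path \<omega>))\<^sup>2 \<partial>M)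
      = (\<Sum>i\<in>I. \<Sum>j\<in>I. \<integral>\<omega>. \<phi> (\<pi> \<omega> i) (path \<omega>) * \<phi> (\<pi> \<omega> j) (path \<omega>) \<partial>M)"
    using meas_Z \<phi>_le by (intro integral_square_sum fin) auto
  also have "\<dots> = (\<Sum>i\<in>I. \<integral>\<omega>. \<phi> (\<pi> \<omega> i) (path \<omega>) * \<phi> (\<pi> \<omega> i) (path \<omega>) \<partial>M)
      + real (card I) * (real (card I) - 1) * \<kappa>"
    using I unfolding \<kappa>_def F_def
    by (intro sum_sum_const_off_diag fin integral_mult_\<pi>_off_diag[OF \<phi> \<phi>_le]) auto
  also have "\<dots> \<le> card I * K\<^sup>2 + card (off_diag I) * \<kappa>"
    using sum_mono[of I _ "\<lambda>_. K\<^sup>2", OF diag] fin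
    by (cases "card I") (simp_all add: card_off_diag algebra_simps)
  finally show ?thesis using off by linarith
qed

end

subsection \<open>Almost sure convergence of the averages\<close>

locale bmc_average = bmc_random_perm M X P \<nu> \<pi>
  for M :: "'b measure" and X :: "nat \<Rightarrow> 'b \<Rightarrow> 'a::metric_space" and P \<nu> \<pi> +
  fixes f :: "'a \<times> 'a \<times> 'a \<Rightarrow> real" and K c \<alpha> :: real
  assumes f_measurable [measurable]: "f \<in> borel_measurable S3" and f_le: "\<And>t. \<bar>f t\<bar> \<le> K"
    and decay: "\<And>j x. \<bar>(Qop P ^^ j) (Pop P f) x\<bar> \<le> c * \<alpha>^j" and \<alpha>: "0 < \<alpha>" "\<alpha> < 1"
begin

definition partial_sum :: "nat \<Rightarrow> 'b \<Rightarrow> real" where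
  "partial_sum n \<omega> = (\<Sum>i=1..n. f (\<Delta> (\<pi> \<omega> i) \<omega>))"

definition \<rho> :: real where
  "\<rho> = 2 * (1 + \<alpha>\<^sup>2)"

lemma \<rho>_bounds: "2 \<le> \<rho>" "\<rho> < 4"
proof -
  have "\<alpha>\<^sup>2 < 1" using \<alpha> by (simp add: power_less_one_iff)
  then show "2 \<le> \<rho>" "\<rho> < 4" unfolding \<rho>_def by simp_all
qed

definition B :: real where
  "B = 2 * K\<^sup>2 + c\<^sup>2 * (2 / (1 - \<alpha>\<^sup>2))"

lemma B_nonneg: "0 \<le> B"
proof -
  have "\<alpha>\<^sup>2 < 1" using \<alpha> by (simp add: power_less_one_iff)
  then show ?thesis unfolding B_def by simp
qed

lemma f_\<Delta>_\<pi>_measurable [measurable]: "(\<lambda>\<omega>. f (\<Delta> (\<pi> \<omega> i) \<omega>)) \<in> borel_measurable M"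
  by (rule measurable_compose_countable[where g="\<lambda>\<omega>. \<pi> \<omega> i"]) auto

lemma partial_sum_measurable [measurable]: "partial_sum n \<in> borel_measurable M"
  unfolding partial_sum_def by measurable

lemma integrable_square_sum_\<pi>:
  assumes "finite I"
  shows "integrable M (\<lambda>\<omega>. (\<Sum>i\<in>I. f (\<Delta> (\<pi> \<omega> i) \<omega>))\<^sup>2)"
proof (rule integrable_bounded[where C="(card I * K)\<^sup>2"])
  show "\<bar>(\<Sum>i\<in>I. f (\<Delta> (\<pi> \<omega> i) \<omega>))\<^sup>2\<bar> \<le> (card I * K)\<^sup>2" for \<omega>
  proof -
    have "\<bar>\<Sum>i\<in>I. f (\<Delta> (\<pi> \<omega> i) \<omega>)\<bar> \<le> (\<Sum>i\<in>I. K)"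
      by (intro order_trans[OF sum_abs] sum_mono f_le)
    then show ?thesis using power_mono[OF _ abs_ge_zero, of _ "card I * K" 2] by simp
  qed
qed measurable

lemma integrable_square_partial_sum: "integrable M (\<lambda>\<omega>. (partial_sum m \<omega>)\<^sup>2)"
  unfolding partial_sum_def by (rule integrable_square_sum_\<pi>) simp

lemma integral_square_sum_\<pi>_gen_le:
  assumes I: "I \<subseteq> gen q"
  shows "(\<integral>\<omega>. (\<Sum>i\<in>I. f (\<Delta> (\<pi> \<omega> i) \<omega>))\<^sup>2 \<partial>M) \<le> B * \<rho>^q"
proof -
  define \<phi> where "\<phi> a x = f (x a, x (2*a), x (2*a+1))" for a and x :: "nat \<Rightarrow> 'a"
  have \<phi>_path: "\<phi> a (path \<omega>) = f (\<Delta> a \<omega>)" for a \<omega> unfolding \<phi>_def path_def \<Delta>_def by simp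
  have \<phi>[measurable]: "\<phi> a \<in> borel_measurable (Pi\<^sub>M UNIV (\<lambda>_. borel))" for a
    unfolding \<phi>_def by measurable
  have \<phi>_le: "\<bar>\<phi> a x\<bar> \<le> K" for a x unfolding \<phi>_def by (rule f_le)
  have "card I \<le> 2^q" using card_mono[OF finite_gen I] unfolding card_gen .
  then have "real (card I) \<le> 2^q" by (metis of_nat_le_iff of_nat_numeral of_nat_power)
  moreover have two_pow: "(2::real)^q \<le> \<rho>^q" using \<rho>_bounds by (intro power_mono) auto
  ultimately have card_I: "real (card I) \<le> \<rho>^q" by linarith
  have "(\<integral>\<omega>. (\<Sum>i\<in>I. f (\<Delta> (\<pi> \<omega> i) \<omega>))\<^sup>2 \<partial>M)
      \<le> card I * K\<^sup>2 + (\<integral>\<omega>. (\<Sum>a\<in>gen q. f (\<Delta> a \<omega>))\<^sup>2 \<partial>M)"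
    using integral_square_sum_\<pi>_le[OF \<phi> \<phi>_le I] unfolding \<phi>_path .
  also have "\<dots> \<le> card I * K\<^sup>2 + (2^q * K\<^sup>2 + (\<integral>\<omega>. (\<Sum>l\<in>gen q. Pop P f (X l \<omega>))\<^sup>2 \<partial>M))"
    using integral_square_sum_gen_le[OF f_measurable f_le] by simp
  also have "\<dots> \<le> card I * K\<^sup>2 + (2^q * K\<^sup>2 + c\<^sup>2 * (2 / (1 - \<alpha>\<^sup>2)) * \<rho>^q)"
    using integral_square_sum_gen_Qop_pow_le[OF Pop_measurable[OF transition f_measurable] decay \<alpha>,
        where q=q and j=0]
    unfolding \<rho>_def by simp
  also have "\<dots> \<le> \<rho>^q * K\<^sup>2 + (\<rho>^q * K\<^sup>2 + c\<^sup>2 * (2 / (1 - \<alpha>\<^sup>2)) * \<rho>^q)"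
    using mult_right_mono[OF card_I, of "K\<^sup>2"] mult_right_mono[OF two_pow, of "K\<^sup>2"] by simp
  also have "\<dots> = B * \<rho>^q" unfolding B_def by (simp add: algebra_simps)
  finally show ?thesis .
qed

lemma partial_sum_gen_decomp:
  assumes m: "m < 2^Suc r"
  shows "partial_sum m \<omega> = (\<Sum>q\<le>r. \<Sum>i\<in>gen q \<inter> {1..m}. f (\<Delta> (\<pi> \<omega> i) \<omega>))"
proof -
  have "{1..m} = (\<Union>q\<le>r. gen q \<inter> {1..m})"
    using ex_gen gen_le_of_less m by fastforce
  then have "partial_sum m \<omega> = (\<Sum>i\<in>(\<Union>q\<le>r. gen q \<inter> {1..m}). f (\<Delta> (\<pi> \<omega> i) \<omega>))"
    unfolding partial_sum_def by simp
  also have "\<dots> = (\<Sum>q\<le>r. \<Sum>i\<in>gen q \<inter> {1..m}. f (\<Delta> (\<pi> \<omega> i) \<omega>))"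
    by (rule sum.UNION_disjoint) (auto dest: gen_unique)
  finally show ?thesis .
qed

text \<open>The generation blocks of a partial sum are combined by Cauchy--Schwarz with weights
  \<open>\<surd>\<rho>\<^sup>q\<close>, matching their second moments \<open>O(\<rho>\<^sup>q)\<close>.\<close>

lemma integral_square_partial_sum_le:
  assumes m: "m \<in> gen r"
  shows "(\<integral>\<omega>. (partial_sum m \<omega>)\<^sup>2 \<partial>M) \<le> B * \<rho> / (sqrt \<rho> - 1)\<^sup>2 * \<rho>^r"
proof -
  define t where "t = sqrt \<rho>"
  have t: "1 < t" "t * t = \<rho>" unfolding t_def using \<rho>_bounds by (simp_all add: real_less_rsqrt)
  have t_pos: "0 < t^q" for q using t by simp
  define Y where "Y q \<omega> = (\<Sum>i\<in>gen q \<inter> {1..m}. f (\<Delta> (\<pi> \<omega> i) \<omega>))" for q \<omega>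
  have Y_int: "integrable M (\<lambda>\<omega>. (Y q \<omega>)\<^sup>2)" for q
    unfolding Y_def by (rule integrable_square_sum_\<pi>) simp
  have Y_le: "(\<integral>\<omega>. (Y q \<omega>)\<^sup>2 \<partial>M) / t^q \<le> B * t^q" for q
  proof -
    have "(\<integral>\<omega>. (Y q \<omega>)\<^sup>2 \<partial>M) \<le> B * (t^q * t^q)"
      unfolding Y_def using integral_square_sum_\<pi>_gen_le[of _ q] t(2)
      by (simp add: power_mult_distrib[symmetric])
    then show ?thesis using t_pos[of q] by (simp add: divide_le_eq)
  qed
  have m_less: "m < 2^Suc r" using m unfolding gen_def by simp
  have "(\<integral>\<omega>. (partial_sum m \<omega>)\<^sup>2 \<partial>M) \<le> (\<integral>\<omega>. (\<Sum>q\<le>r. t^q) * (\<Sum>q\<le>r. (Y q \<omega>)\<^sup>2 / t^q) \<partial>M)"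
  proof (rule integral_mono)
    show "(partial_sum m \<omega>)\<^sup>2 \<le> (\<Sum>q\<le>r. t^q) * (\<Sum>q\<le>r. (Y q \<omega>)\<^sup>2 / t^q)" for \<omega>
      unfolding partial_sum_gen_decomp[OF m_less] Y_def by (rule square_sum_le_weighted[OF t_pos])
  qed (use integrable_square_partial_sum Y_int in auto)
  also have "\<dots> = (\<Sum>q\<le>r. t^q) * (\<Sum>q\<le>r. (\<integral>\<omega>. (Y q \<omega>)\<^sup>2 \<partial>M) / t^q)"
    using Y_int by simp
  also have "\<dots> \<le> (\<Sum>q\<le>r. t^q) * (\<Sum>q\<le>r. B * t^q)"
    using Y_le t_pos by (intro mult_left_mono sum_mono) (auto intro: sum_nonneg less_imp_le)
  also have "\<dots> = B * (\<Sum>q\<le>r. t^q)\<^sup>2"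
    by (simp add: sum_distrib_left[symmetric] power2_eq_square)
  also have "\<dots> \<le> B * (t^Suc r / (t - 1))\<^sup>2"
    using B_nonneg sum_power_le_geometric[OF t(1)] t_pos
    by (intro mult_left_mono power_mono) (auto intro: sum_nonneg less_imp_le)
  also have "\<dots> = B * \<rho> / (sqrt \<rho> - 1)\<^sup>2 * \<rho>^r"
  proof -
    have "(t^Suc r)\<^sup>2 = (t * t)^Suc r" by (simp only: power2_eq_square power_mult_distrib)
    then have "(t^Suc r)\<^sup>2 = \<rho> * \<rho>^r" by (simp add: t(2))
    then show ?thesis unfolding power_divide t_def[symmetric] by simp
  qed
  finally show ?thesis .
qed

definition energy :: "nat \<Rightarrow> 'b \<Rightarrow> real" where
  "energy r \<omega> = (\<Sum>m\<in>gen r. (partial_sum m \<omega>)\<^sup>2) / 8^r"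

lemma integral_energy_le: "(\<integral>\<omega>. energy r \<omega> \<partial>M) \<le> B * \<rho> / (sqrt \<rho> - 1)\<^sup>2 * (\<rho> / 4)^r"
proof -
  have "(\<integral>\<omega>. energy r \<omega> \<partial>M) = (\<Sum>m\<in>gen r. \<integral>\<omega>. (partial_sum m \<omega>)\<^sup>2 \<partial>M) / 8^r"
    unfolding energy_def using integrable_square_partial_sum by simp
  also have "\<dots> \<le> (\<Sum>m\<in>gen r. B * \<rho> / (sqrt \<rho> - 1)\<^sup>2 * \<rho>^r) / 8^r"
    by (intro divide_right_mono sum_mono integral_square_partial_sum_le) auto
  also have "\<dots> = B * \<rho> / (sqrt \<rho> - 1)\<^sup>2 * (\<rho> / 4)^r"
    using power_mult_distrib[of "2::real" 4 r] by (simp add: card_gen power_divide)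
  finally show ?thesis .
qed

lemma AE_energy_tendsto_0: "AE \<omega> in M. (\<lambda>r. energy r \<omega>) \<longlonglongrightarrow> 0"
proof (rule AE_LIMSEQ_0_of_summable_integral)
  show "integrable M (energy r)" for r
    unfolding energy_def using integrable_square_partial_sum by simp
  show "summable (\<lambda>r. B * \<rho> / (sqrt \<rho> - 1)\<^sup>2 * (\<rho> / 4)^r)"
    using \<rho>_bounds by (intro summable_mult summable_geometric) auto
  show "energy r \<in> borel_measurable M" for r unfolding energy_def by measurable
  show "0 \<le> energy r \<omega>" for r \<omega> unfolding energy_def by (simp add: sum_nonneg)
qed (rule integral_energy_le)

lemma AE_average_tendsto_0: "AE \<omega> in M. (\<lambda>n. partial_sum n \<omega> / real n) \<longlonglongrightarrow> 0"
  using AE_energy_tendsto_0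
proof (rule AE_mp, intro AE_I2 impI)
  fix \<omega> assume "(\<lambda>r. energy r \<omega>) \<longlonglongrightarrow> 0"
  moreover have "\<bar>partial_sum (Suc m) \<omega> - partial_sum m \<omega>\<bar> \<le> K" for m
    using f_le unfolding partial_sum_def by simp
  ultimately show "(\<lambda>n. partial_sum n \<omega> / real n) \<longlonglongrightarrow> 0"
    unfolding energy_def by (intro LIMSEQ_div_of_gen_energy) auto
qed

end

lemma (in bmc_random_perm) AE_average_triples_tendsto_0:
  assumes "H2 P \<mu>" and f: "f \<in> bounded_meas S3" and f0: "(\<integral>x. Pop P f x \<partial>\<mu>) = 0"
  shows "AE \<omega> in M. (\<lambda>n. (\<Sum>i=1..n. f (X (\<pi> \<omega> i) \<omega>, X (2 * \<pi> \<omega> i) \<omega>, X (2 * \<pi> \<omega> i + 1) \<omega>))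
    / real n) \<longlonglongrightarrow> 0"
proof -
  obtain \<alpha> :: real where \<alpha>: "0 < \<alpha>" "\<alpha> < 1" and H: "\<forall>g \<in> bounded_meas (borel :: 'a measure).
      (\<integral>x. g x \<partial>\<mu>) = 0 \<longrightarrow> (\<exists>c>0. \<forall>r x. \<bar>(Qop P ^^ r) g x\<bar> \<le> c * \<alpha>^r)"
    using \<open>H2 P \<mu>\<close> unfolding H2_def by blast
  obtain K where f_meas: "f \<in> borel_measurable S3" and f_le: "\<And>t. \<bar>f t\<bar> \<le> K"
    using f unfolding bounded_meas_def by (auto simp: space_pair_measure)
  have "Pop P f \<in> bounded_meas borel"
    using Pop_measurable[OF transition f_meas] Pop_abs_le[OF transition f_meas f_le]
    unfolding bounded_meas_def by blast
  then obtain c where "\<And>r x. \<bar>(Qop P ^^ r) (Pop P f) x\<bar> \<le> c * \<alpha>^r"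
    using H f0 by blast
  then interpret bmc_average M X P \<nu> \<pi> f K c \<alpha>
    by unfold_locales (use \<alpha> f_meas f_le in auto)
  show ?thesis using AE_average_tendsto_0 unfolding partial_sum_def \<Delta>_def .
qed

theorem corollary3p3:
  fixes M :: "'b measure" and X :: "nat \<Rightarrow> 'b \<Rightarrow> 'a::metric_space"
    and \<nu> \<mu> :: "'a measure" and P :: "'a \<Rightarrow> ('a \<times> 'a) measure"
    and \<pi> :: "'b \<Rightarrow> nat \<Rightarrow> nat"
  assumes "prob_space M"
    and "T_transition P"
    and "BMC M X \<nu> P"
    and "uniform_gen_perm M \<pi> X"
    and "prob_space \<mu>" and "sets \<mu> = sets borel"
    and "H2 P \<mu>"
  shows "(\<forall>f \<in> bounded_meas (borel :: 'a measure). (\<integral>x. f x \<partial>\<mu>) = 0 \<longrightarrow>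
            (AE \<omega> in M. (\<lambda>n. (\<Sum>i=1..n. f (X (\<pi> \<omega> i) \<omega>)) / real n) \<longlonglongrightarrow> 0))
       \<and> (\<forall>f \<in> bounded_meas S3. (\<integral>x. Pop P f x \<partial>\<mu>) = 0 \<longrightarrow>
            (AE \<omega> in M. (\<lambda>n. (\<Sum>i=1..n. f (X (\<pi> \<omega> i) \<omega>, X (2 * \<pi> \<omega> i) \<omega>, X (2 * \<pi> \<omega> i + 1) \<omega>))
                              / real n) \<longlonglongrightarrow> 0))"
proof -
  interpret bmc_random_perm M X P \<nu> \<pi>
    using assms(1-4) unfolding bmc_random_perm_def bmc_random_perm_axioms_def
      bifurcating_markov_chain_def bifurcating_markov_chain_axioms_def by simp
  have triples: "\<forall>f \<in> bounded_meas S3. (\<integral>x. Pop P f x \<partial>\<mu>) = 0 \<longrightarrow>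
      (AE \<omega> in M. (\<lambda>n. (\<Sum>i=1..n. f (X (\<pi> \<omega> i) \<omega>, X (2 * \<pi> \<omega> i) \<omega>, X (2 * \<pi> \<omega> i + 1) \<omega>))
        / real n) \<longlonglongrightarrow> 0)"
    using AE_average_triples_tendsto_0[OF assms(7)] by blast
  have "AE \<omega> in M. (\<lambda>n. (\<Sum>i=1..n. f (X (\<pi> \<omega> i) \<omega>)) / real n) \<longlonglongrightarrow> 0"
    if f: "f \<in> bounded_meas borel" and f0: "(\<integral>x. f x \<partial>\<mu>) = 0" for f :: "'a \<Rightarrow> real"
  proof -
    obtain C where [measurable]: "f \<in> borel_measurable borel" and "\<And>x. \<bar>f x\<bar> \<le> C"
      using f unfolding bounded_meas_def by auto
    moreover have "(\<lambda>t :: 'a \<times> 'a \<times> 'a. f (fst t)) \<in> borel_measurable S3" by measurable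
    ultimately have "(\<lambda>t. f (fst t)) \<in> bounded_meas S3" unfolding bounded_meas_def by blast
    then show ?thesis using triples f0 Pop_fst[OF transition, of f] by fastforce
  qed
  with triples show ?thesis by blast
qed

end
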